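(* Let $\mathcal{H}$ be a PICOD hypergraph with $\eta(\mathcal{H})=\Delta(\mathcal{H})$. Then $\beta_q(\mathcal{H})=\Delta(\mathcal{H})$ for every prime power $q$, and hence $\beta(\mathcal{H})=\Delta(\mathcal{H})$.
   Context: PICOD problem: a server holds $m$ messages $b_1,\dots,b_m\in\mathbb{F}_q$; there are $n$ clients, client $i$ having side-information $\{b_j: j\in S_i\}$, $S_i\subseteq[m]$, and request-set $R_i=[m]\setminus S_i$ (assumed non-empty); client $i$ wants any one message $b_j$ with $j\in R_i$. A PICOD scheme of length $\ell$ over $\mathbb{F}_q$ is an encoding map $\phi:\mathbb{F}_q^m\to\mathbb{F}_q^\ell$ such that for every client $i$ there is an index $j_i\in R_i$ and a function $\psi_i$ with $\psi_i(\phi(b),(b_k)_{k\in S_i})=b_{j_i}$ for all $b\in\mathbb{F}_q^m$. The PICOD hypergraph $\mathcal{H}=(\mathcal{V},\mathcal{E})$ has vertex set $[m]$ and edge set $\{R_i:i\in[n]\}$. $\beta_q(\mathcal{H})$ is the minimum length of a PICOD scheme over $\mathbb{F}_q$, and $\beta(\mathcal{H})=\min_q\beta_q(\mathcal{H})$. The degree of a vertex is the number of edges containing it; $\Delta(\mathcal{H})$ is the maximum degree. A nested collection of hyperedges of nesting length $L$ is a family $\mathcal{E}_1,\dots,\mathcal{E}_L\subseteq\mathcal{E}$ with $|\mathcal{E}_i|=2^{i-1}$, such that for every $i\in[L-1]$ and every $R\in\mathcal{E}_i$ there exist non-empty edges $R',R''\in\mathcal{E}_{i+1}$ with $R',R''\subsetneq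 R$ and $R'\cap R''=\emptyset$. The nesting number $\eta(\mathcal{H})$ is the maximum nesting length of such a collection in $\mathcal{H}$. *)

theory Defs
  imports "HOL-Computational_Algebra.Primes"
begin

(* Messages/codewords: vectors of length k over an alphabet of size q
   (identified with {0..<q}; F_q as a set of q symbols), represented as
   functions nat => nat that vanish outside {0..<k}. *)
definition vecs :: "nat \<Rightarrow> nat \<Rightarrow> (nat \<Rightarrow> nat) set" where
  "vecs q k = {b. (\<forall>j<k. b j < q) \<and> (\<forall>j\<ge>k. b j = 0)}"

(* PICOD instance: m messages 0..m-1, n clients 0..n-1, client i has request set R i,
   side information S i = {0..<m} - R i. *)
definition side_info :: "nat \<Rightarrow> (nat \<Rightarrow> nat set) \<Rightarrow> nat \<Rightarrow> nat set" where
  "side_info m R i = {..<m} - R i"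

definition is_picod_scheme :: "nat \<Rightarrow> nat \<Rightarrow> nat \<Rightarrow> (nat \<Rightarrow> nat set) \<Rightarrow> nat \<Rightarrow> bool" where
  "is_picod_scheme q m n R l \<longleftrightarrow>
     (\<exists>\<phi> :: (nat \<Rightarrow> nat) \<Rightarrow> (nat \<Rightarrow> nat).
        (\<forall>b\<in>vecs q m. \<phi> b \<in> vecs q l) \<and>
        (\<forall>i<n. \<exists>j\<in>R i. \<exists>\<psi> :: (nat \<Rightarrow> nat) \<Rightarrow> (nat \<Rightarrow> nat) \<Rightarrow> nat.
            \<forall>b\<in>vecs q m. \<psi> (\<phi> b) (\<lambda>k. if k \<in> side_info m R i then b k else 0) = b j))"

definition beta_q :: "nat \<Rightarrow> nat \<Rightarrow> nat \<Rightarrow> (nat \<Rightarrow> nat set) \<Rightarrow> nat" where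
  "beta_q q m n R = (LEAST l. is_picod_scheme q m n R l)"

definition prime_power :: "nat \<Rightarrow> bool" where
  "prime_power q \<longleftrightarrow> (\<exists>p k. prime p \<and> k \<ge> 1 \<and> q = p ^ k)"

definition beta :: "nat \<Rightarrow> nat \<Rightarrow> (nat \<Rightarrow> nat set) \<Rightarrow> nat" where
  "beta m n R = Inf {beta_q q m n R | q. prime_power q}"

definition edges :: "nat \<Rightarrow> (nat \<Rightarrow> nat set) \<Rightarrow> nat set set" where
  "edges n R = R ` {..<n}"

definition degree :: "nat set set \<Rightarrow> nat \<Rightarrow> nat" where
  "degree E v = card {e\<in>E. v \<in> e}"

definition max_degree :: "nat \<Rightarrow> nat set set \<Rightarrow> nat" where
  "max_degree m E = Max (insert 0 (degree E ` {..<m}))"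

definition is_nested_collection :: "nat set set \<Rightarrow> nat \<Rightarrow> (nat \<Rightarrow> nat set set) \<Rightarrow> bool" where
  "is_nested_collection E L F \<longleftrightarrow>
     (\<forall>i\<in>{1..L}. F i \<subseteq> E \<and> card (F i) = 2 ^ (i - 1)) \<and>
     (\<forall>i\<in>{1..L-1}. \<forall>R\<in>F i. \<exists>R' R''. R' \<in> F (i+1) \<and> R'' \<in> F (i+1) \<and>
         R' \<noteq> {} \<and> R'' \<noteq> {} \<and> R' \<subset> R \<and> R'' \<subset> R \<and> R' \<inter> R'' = {})"

definition nesting_number :: "nat set set \<Rightarrow> nat" where
  "nesting_number E = (GREATEST L. \<exists>F. is_nested_collection E L F)"

end

theory Submission
  imports Defs "HOL-Library.FuncSet"
begin

text \<open>
  Achievability: a maximal set \<open>T\<close> meeting every edge in at most one vertex meets, for each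
  vertex, some edge through it in exactly one vertex; discarding the edges met exactly once lowers
  every degree, so \<open>\<Delta>\<close> such sets \<open>T\<^sub>1, \<dots>, T\<^sub>\<Delta>\<close> suffice to meet every edge exactly once. Sending
  the sums \<open>\<Sum>\<^sub>v\<^sub>\<in>\<^sub>T\<^sub>k b\<^sub>v mod q\<close> lets each client recover the unique requested message in some \<open>T\<^sub>k\<close>.

  Converse: if client \<open>c\<close> decodes \<open>b\<^sub>j\<close>, the codewords of message vectors agreeing outside \<open>R\<^sub>c\<close> but
  differing at \<open>j\<close> are distinct. One of the two disjoint children of \<open>R\<^sub>c\<close> in a nested collection
  avoids \<open>j\<close>, so going down the \<open>L\<close> levels multiplies the number of codewords by \<open>q\<close> each time:
  there are at least \<open>q\<^sup>L\<close> codewords, whence \<open>L \<le> \<ell>\<close>.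
\<close>

lemma finite_vecs: "finite (vecs q k)"
  and card_vecs_le: "card (vecs q k) \<le> q ^ k"
proof -
  define ext where "ext f = (\<lambda>j. if j < k then f j else 0)" for f :: "nat \<Rightarrow> nat"
  have sub: "vecs q k \<subseteq> ext ` ({..<k} \<rightarrow>\<^sub>E {..<q})"
  proof
    fix b assume b: "b \<in> vecs q k"
    then have "b = ext (restrict b {..<k})" by (auto simp: vecs_def ext_def fun_eq_iff)
    moreover have "restrict b {..<k} \<in> {..<k} \<rightarrow>\<^sub>E {..<q}" using b by (auto simp: vecs_def)
    ultimately show "b \<in> ext ` ({..<k} \<rightarrow>\<^sub>E {..<q})" by blast
  qed
  have fin: "finite ({..<k} \<rightarrow>\<^sub>E {..<q})" by (simp add: finite_PiE)
  show "finite (vecs q k)" using finite_subset[OF sub finite_imageI[OF fin]] .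
  have "card (vecs q k) \<le> card (ext ` ({..<k} \<rightarrow>\<^sub>E {..<q}))"
    by (rule card_mono[OF finite_imageI[OF fin] sub])
  also have "\<dots> \<le> card ({..<k} \<rightarrow>\<^sub>E {..<q})" by (rule card_image_le[OF fin])
  finally show "card (vecs q k) \<le> q ^ k" by (simp add: card_PiE)
qed

lemma degree_pos:
  assumes "finite E" "e \<in> E" "v \<in> e"
  shows "0 < degree E v"
  using assms by (auto simp: degree_def card_gt_0_iff)

lemma degree_le_max_degree:
  assumes "v < m"
  shows "degree E v \<le> max_degree m E"
  unfolding max_degree_def using assms by (intro Max_ge) auto

lemma max_sparse_set_exists:
  assumes "finite (\<Union>E)"
  obtains T where "T \<subseteq> \<Union>E" "\<forall>e\<in>E. card (e \<inter> T) \<le> 1"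
    "\<forall>e\<in>E. \<forall>v\<in>e. \<exists>e'\<in>E. v \<in> e' \<and> card (e' \<inter> T) = 1"
proof -
  define P where "P = {T. T \<subseteq> \<Union>E \<and> (\<forall>e\<in>E. card (e \<inter> T) \<le> 1)}"
  have "finite P" unfolding P_def using assms by (auto intro: finite_subset[of _ "Pow (\<Union>E)"])
  moreover have "{} \<in> P" unfolding P_def by auto
  ultimately obtain T where "T \<in> P" and max: "\<forall>T'\<in>P. T \<subseteq> T' \<longrightarrow> T = T'"
    using finite_has_maximal by blast
  then have T: "T \<subseteq> \<Union>E" and sparse: "\<forall>e\<in>E. card (e \<inter> T) \<le> 1" by (auto simp: P_def)
  have fin: "finite (e \<inter> T)" for e using T assms by (auto intro: finite_subset)
  have "\<exists>e'\<in>E. v \<in> e' \<and> card (e' \<inter> T) = 1" if e: "e \<in> E" and v: "v \<in> e" for e v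
  proof (cases "v \<in> T")
    case True
    then have "card (e \<inter> T) \<noteq> 0" using fin[of e] v by auto
    then show ?thesis using sparse e v by (intro bexI[of _ e]) auto
  next
    case False
    have "insert v T \<notin> P" using max False by auto
    then obtain e' where e': "e' \<in> E" and "\<not> card (e' \<inter> insert v T) \<le> 1"
      using T e v unfolding P_def by auto
    moreover from this have "v \<in> e'" using sparse by (cases "v \<in> e'") auto
    moreover from this have "card (e' \<inter> insert v T) = Suc (card (e' \<inter> T))"
      using fin[of e'] False by (simp add: Int_insert_right)
    ultimately show ?thesis using sparse by (intro bexI[of _ e']) auto
  qed
  with T sparse show thesis using that by blast
qed

lemma isolating_sets_exist:
  assumes "finite E" "\<forall>e\<in>E. finite e \<and> e \<noteq> {}" "\<forall>v\<in>\<Union>E. degree E v \<le> d"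
  shows "\<exists>T. (\<forall>k. T k \<subseteq> \<Union>E) \<and> (\<forall>e\<in>E. \<exists>k<d. card (e \<inter> T k) = 1)"
  using assms
proof (induction d arbitrary: E)
  case 0
  then have "E = {}" using degree_pos[of E] by fastforce
  then show ?case by auto
next
  case (Suc d)
  have finU: "finite (\<Union>E)" using Suc.prems by (intro finite_Union) auto
  obtain T0 where T0: "T0 \<subseteq> \<Union>E" and "\<forall>e\<in>E. card (e \<inter> T0) \<le> 1"
    and cov: "\<forall>e\<in>E. \<forall>v\<in>e. \<exists>e'\<in>E. v \<in> e' \<and> card (e' \<inter> T0) = 1"
    by (rule max_sparse_set_exists[OF finU])
  define E' where "E' = {e\<in>E. card (e \<inter> T0) \<noteq> 1}"
  have deg: "degree E' v \<le> d" if v: "v \<in> \<Union>E'" for v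
  proof -
    obtain e' where e': "e' \<in> E" "v \<in> e'" "card (e' \<inter> T0) = 1"
      using v cov unfolding E'_def by blast
    have fin: "finite {e\<in>E. v \<in> e}" using Suc.prems(1) by simp
    have "degree E' v \<le> card ({e\<in>E. v \<in> e} - {e'})"
      unfolding degree_def using fin e' by (intro card_mono) (auto simp: E'_def)
    also have "\<dots> = degree E v - 1" using fin e' by (simp add: degree_def)
    finally have "degree E' v \<le> degree E v - 1" .
    moreover have "v \<in> \<Union>E" using v by (auto simp: E'_def)
    ultimately show ?thesis using Suc.prems(3) by fastforce
  qed
  moreover have "finite E'" "\<forall>e\<in>E'. finite e \<and> e \<noteq> {}" using Suc.prems by (auto simp: E'_def)
  ultimately obtain T' where T': "\<forall>k. T' k \<subseteq> \<Union>E'" and iso: "\<forall>e\<in>E'. \<exists>k<d. card (e \<inter> T' k) = 1"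
    using Suc.IH[of E'] by blast
  define T where "T k = (if k = 0 then T0 else T' (k - 1))" for k
  have "\<Union>E' \<subseteq> \<Union>E" by (auto simp: E'_def)
  then have "T' k \<subseteq> \<Union>E" for k using T' by blast
  then have "\<forall>k. T k \<subseteq> \<Union>E" using T0 by (simp add: T_def)
  moreover have "\<exists>k<Suc d. card (e \<inter> T k) = 1" if "e \<in> E" for e
  proof (cases "e \<in> E'")
    case True
    then obtain k where "k < d" "card (e \<inter> T' k) = 1" using iso by blast
    then show ?thesis by (intro exI[of _ "Suc k"]) (auto simp: T_def)
  next
    case False
    then show ?thesis using that by (intro exI[of _ 0]) (auto simp: T_def E'_def)
  qed
  ultimately show ?case by blast
qed

definition decodes ::
  "nat \<Rightarrow> nat \<Rightarrow> (nat \<Rightarrow> nat set) \<Rightarrow> ((nat \<Rightarrow> nat) \<Rightarrow> (nat \<Rightarrow> nat)) \<Rightarrow> nat \<Rightarrow> nat \<Rightarrow> bool"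
  where "decodes q m R \<phi> i j \<longleftrightarrow> (\<exists>\<psi> :: (nat \<Rightarrow> nat) \<Rightarrow> (nat \<Rightarrow> nat) \<Rightarrow> nat.
           \<forall>b\<in>vecs q m. \<psi> (\<phi> b) (\<lambda>k. if k \<in> side_info m R i then b k else 0) = b j)"

lemma is_picod_scheme_iff_decodes:
  "is_picod_scheme q m n R l \<longleftrightarrow>
     (\<exists>\<phi>. (\<forall>b\<in>vecs q m. \<phi> b \<in> vecs q l) \<and> (\<forall>i<n. \<exists>j\<in>R i. decodes q m R \<phi> i j))"
  unfolding is_picod_scheme_def decodes_def ..

lemma mod_add_sub_cancel_nat:
  fixes x y q :: nat
  assumes "x < q"
  shows "nat ((int ((x + y) mod q) - int y) mod int q) = x"
proof -
  have "(int ((x + y) mod q) - int y) mod int q = int x mod int q"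
    by (simp add: of_nat_mod mod_diff_left_eq)
  then show ?thesis using assms by simp
qed

lemma sum_mod_decodes:
  assumes T: "finite (T k)" "T k \<subseteq> {..<m}" and j: "R i \<inter> T k = {j}" and k: "k < d"
  shows "decodes q m R (\<lambda>b k. if k < d then (\<Sum>v\<in>T k. b v) mod q else 0) i j"
proof -
  have jT: "j \<in> T k" and jm: "j < m" using j T by auto
  have side: "(\<Sum>v\<in>T k - {j}. if v \<in> side_info m R i then b v else 0) = (\<Sum>v\<in>T k - {j}. b v)"
    for b using j T by (intro sum.cong) (auto simp: side_info_def)
  show ?thesis unfolding decodes_def
  proof (intro exI[of _ "\<lambda>c s. nat ((int (c k) - int (\<Sum>v\<in>T k - {j}. s v)) mod int q)"] ballI)
    fix b assume "b \<in> vecs q m"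
    then have "b j < q" using jm by (auto simp: vecs_def)
    have enc: "(if k < d then (\<Sum>v\<in>T k. b v) mod q else 0) = (b j + (\<Sum>v\<in>T k - {j}. b v)) mod q"
      using k sum.remove[OF T(1) jT, of b] by simp
    show "nat ((int (if k < d then (\<Sum>v\<in>T k. b v) mod q else 0) -
        int (\<Sum>v\<in>T k - {j}. if v \<in> side_info m R i then b v else 0)) mod int q) = b j"
      unfolding side enc by (rule mod_add_sub_cancel_nat[OF \<open>b j < q\<close>])
  qed
qed

lemma is_picod_scheme_isolating_sets:
  assumes T: "\<forall>k. T k \<subseteq> {..<m}" and iso: "\<forall>i<n. \<exists>k<d. card (R i \<inter> T k) = 1"
    and "q \<ge> 1"
  shows "is_picod_scheme q m n R d"
  unfolding is_picod_scheme_iff_decodes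
proof (intro exI[of _ "\<lambda>b k. if k < d then (\<Sum>v\<in>T k. b v) mod q else 0"] conjI ballI allI impI)
  show "(\<lambda>k. if k < d then (\<Sum>v\<in>T k. b v) mod q else 0) \<in> vecs q d" for b
    using \<open>q \<ge> 1\<close> unfolding vecs_def by auto
  fix i assume "i < n"
  then obtain k j where "k < d" "R i \<inter> T k = {j}" using iso card_1_singletonE by metis
  moreover have "finite (T k)" using T finite_subset by blast
  ultimately show "\<exists>j\<in>R i. decodes q m R (\<lambda>b k. if k < d then (\<Sum>v\<in>T k. b v) mod q else 0) i j"
    using sum_mod_decodes[of T k m R i _ d q] T by blast
qed

lemma is_picod_scheme_max_degree:
  assumes R: "\<forall>i<n. R i \<subseteq> {..<m} \<and> R i \<noteq> {}" and "q \<ge> 1"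
  shows "is_picod_scheme q m n R (max_degree m (edges n R))"
proof -
  have sub: "\<Union>(edges n R) \<subseteq> {..<m}" using R by (auto simp: edges_def)
  have "finite (edges n R)" by (simp add: edges_def)
  moreover have "\<forall>e\<in>edges n R. finite e \<and> e \<noteq> {}" using R by (auto simp: edges_def intro: finite_subset)
  moreover have "\<forall>v\<in>\<Union>(edges n R). degree (edges n R) v \<le> max_degree m (edges n R)"
    using sub degree_le_max_degree by blast
  ultimately obtain T where T: "\<forall>k. T k \<subseteq> \<Union>(edges n R)"
    and iso: "\<forall>e\<in>edges n R. \<exists>k<max_degree m (edges n R). card (e \<inter> T k) = 1"
    by (metis isolating_sets_exist)
  show ?thesis
  proof (rule is_picod_scheme_isolating_sets[OF _ _ \<open>q \<ge> 1\<close>])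
    show "\<forall>k. T k \<subseteq> {..<m}" using T sub by blast
    show "\<forall>i<n. \<exists>k<max_degree m (edges n R). card (R i \<inter> T k) = 1" using iso by (simp add: edges_def)
  qed
qed

definition agree_outside :: "nat \<Rightarrow> nat \<Rightarrow> nat set \<Rightarrow> (nat \<Rightarrow> nat) \<Rightarrow> (nat \<Rightarrow> nat) set" where
  "agree_outside q m e a = {b \<in> vecs q m. \<forall>k. k \<notin> e \<longrightarrow> b k = a k}"

lemma agree_outside_mono: "e' \<subseteq> e \<Longrightarrow> a' \<in> agree_outside q m e a \<Longrightarrow>
    agree_outside q m e' a' \<subseteq> agree_outside q m e a"
  by (auto simp: agree_outside_def)

lemma decodes_agree_outside:
  assumes "decodes q m R \<phi> i j" "b \<in> agree_outside q m (R i) a" "b' \<in> agree_outside q m (R i) a"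
    and "\<phi> b = \<phi> b'"
  shows "b j = b' j"
proof -
  have "(\<lambda>k. if k \<in> side_info m R i then b k else 0) = (\<lambda>k. if k \<in> side_info m R i then b' k else 0)"
    using assms(2,3) by (auto simp: agree_outside_def side_info_def)
  with assms show ?thesis unfolding decodes_def agree_outside_def by (metis (no_types, lifting) mem_Collect_eq)
qed

lemma sum_card_image_le_card_image_agree_outside:
  assumes dec: "decodes q m R \<phi> i j"
    and A: "\<forall>t<q. A t \<subseteq> agree_outside q m (R i) a" and At: "\<forall>t<q. \<forall>b\<in>A t. b j = t"
  shows "(\<Sum>t<q. card (\<phi> ` A t)) \<le> card (\<phi> ` agree_outside q m (R i) a)"
proof -
  have fin: "finite (\<phi> ` agree_outside q m (R i) a)"
    using finite_vecs by (auto simp: agree_outside_def)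
  have sub: "\<phi> ` A t \<subseteq> \<phi> ` agree_outside q m (R i) a" if "t < q" for t
    using A that by (intro image_mono) auto
  have disj: "\<phi> ` A s \<inter> \<phi> ` A t = {}" if "s < q" "t < q" "s \<noteq> t" for s t
  proof (intro equals0I)
    fix c assume "c \<in> \<phi> ` A s \<inter> \<phi> ` A t"
    then obtain b b' where "b \<in> A s" "b' \<in> A t" "\<phi> b = \<phi> b'" by auto
    then have "b j = b' j" using A that by (intro decodes_agree_outside[OF dec]) auto
    moreover have "b j = s" "b' j = t" using At that \<open>b \<in> A s\<close> \<open>b' \<in> A t\<close> by blast+
    ultimately show False using \<open>s \<noteq> t\<close> by simp
  qed
  have "(\<Sum>t<q. card (\<phi> ` A t)) = card (\<Union>t<q. \<phi> ` A t)"
    using finite_subset[OF sub fin] disj by (intro card_UN_disjoint[symmetric]) auto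
  also have "\<dots> \<le> card (\<phi> ` agree_outside q m (R i) a)" using sub by (intro card_mono[OF fin]) auto
  finally show ?thesis .
qed

lemma nested_collection_subset:
  "is_nested_collection E L F \<Longrightarrow> 1 \<le> i \<Longrightarrow> i \<le> L \<Longrightarrow> F i \<subseteq> E"
  by (simp add: is_nested_collection_def)

lemma nested_collection_child_avoiding:
  assumes "is_nested_collection E L F" "1 \<le> i" "i < L" "e \<in> F i"
  obtains e' where "e' \<in> F (i + 1)" "e' \<subseteq> e" "j \<notin> e'"
proof -
  have "i \<in> {1..L-1}" using assms by auto
  moreover have "\<forall>i\<in>{1..L-1}. \<forall>e\<in>F i. \<exists>e' e''. e' \<in> F (i+1) \<and> e'' \<in> F (i+1) \<and>
      e' \<noteq> {} \<and> e'' \<noteq> {} \<and> e' \<subset> e \<and> e'' \<subset> e \<and> e' \<inter> e'' = {}"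
    using assms(1) unfolding is_nested_collection_def by (rule conjunct2)
  ultimately obtain e' e'' where "e' \<in> F (i+1)" "e'' \<in> F (i+1)" "e' \<subset> e" "e'' \<subset> e" "e' \<inter> e'' = {}"
    using assms(4) by meson
  then show thesis using that by blast
qed

lemma nested_collection_decoded_index:
  assumes R: "\<forall>i<n. R i \<subseteq> {..<m}" and F: "is_nested_collection (edges n R) L F"
    and dec: "\<forall>i<n. \<exists>j\<in>R i. decodes q m R \<phi> i j"
    and "1 \<le> i" "i \<le> L" "e \<in> F i"
  obtains c j where "e = R c" "decodes q m R \<phi> c j" "j \<in> e" "j < m"
proof -
  have "e \<in> edges n R" using nested_collection_subset[OF F] assms(4-6) by blast
  then obtain c where "c < n" "e = R c" by (auto simp: edges_def)
  with dec R that show thesis by blast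
qed

lemma nested_collection_card_image_agree_outside:
  assumes R: "\<forall>i<n. R i \<subseteq> {..<m}" and F: "is_nested_collection (edges n R) L F"
    and dec: "\<forall>i<n. \<exists>j\<in>R i. decodes q m R \<phi> i j"
  shows "1 \<le> i \<Longrightarrow> i + d \<le> L \<Longrightarrow> e \<in> F i \<Longrightarrow> a \<in> vecs q m \<Longrightarrow>
    q ^ Suc d \<le> card (\<phi> ` agree_outside q m e a)"
proof (induction d arbitrary: i e a)
  case 0
  obtain c j where e: "e = R c" and "decodes q m R \<phi> c j" "j \<in> e" "j < m"
    by (rule nested_collection_decoded_index[OF R F dec, of i e]) (use 0 in auto)
  then have "(\<Sum>t<q. card (\<phi> ` {a(j := t)})) \<le> card (\<phi> ` agree_outside q m e a)"
    unfolding e using 0 by (intro sum_card_image_le_card_image_agree_outside)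
      (auto simp: agree_outside_def vecs_def)
  then show ?case by simp
next
  case (Suc d)
  obtain c j where e: "e = R c" and dec_j: "decodes q m R \<phi> c j" and j: "j \<in> e" "j < m"
    by (rule nested_collection_decoded_index[OF R F dec, of i e]) (use Suc.prems in auto)
  obtain e' where e': "e' \<in> F (i + 1)" "e' \<subseteq> e" "j \<notin> e'"
    by (rule nested_collection_child_avoiding[OF F, of i e]) (use Suc.prems in auto)
  have a: "a(j := t) \<in> agree_outside q m e a" if "t < q" for t
    using Suc.prems j that by (auto simp: agree_outside_def vecs_def)
  have "q ^ Suc (Suc d) = (\<Sum>t<q. q ^ Suc d)" by simp
  also have "\<dots> \<le> (\<Sum>t<q. card (\<phi> ` agree_outside q m e' (a(j := t))))"
  proof (intro sum_mono Suc.IH)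
    show "a(j := t) \<in> vecs q m" if "t \<in> {..<q}" for t using a that by (simp add: agree_outside_def)
  qed (use Suc.prems e' in auto)
  also have "\<dots> \<le> card (\<phi> ` agree_outside q m e a)"
    unfolding e
  proof (intro sum_card_image_le_card_image_agree_outside[OF dec_j] allI impI ballI)
    show "agree_outside q m e' (a(j := t)) \<subseteq> agree_outside q m (R c) a" if "t < q" for t
      using agree_outside_mono[OF e'(2) a[OF that]] e by simp
    show "b j = t" if "b \<in> agree_outside q m e' (a(j := t))" for b t
      using that e'(3) by (simp add: agree_outside_def)
  qed
  finally show ?case .
qed

lemma nested_collection_le_scheme_length:
  assumes R: "\<forall>i<n. R i \<subseteq> {..<m}" and F: "is_nested_collection (edges n R) L F"
    and scheme: "is_picod_scheme q m n R l" and "q \<ge> 2"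
  shows "L \<le> l"
proof (cases "L = 0")
  case False
  obtain \<phi> where \<phi>: "\<forall>b\<in>vecs q m. \<phi> b \<in> vecs q l" and dec: "\<forall>i<n. \<exists>j\<in>R i. decodes q m R \<phi> i j"
    using scheme unfolding is_picod_scheme_iff_decodes by blast
  have "card (F 1) = 1" using F False unfolding is_nested_collection_def by auto
  then obtain e where e: "e \<in> F 1" by (metis card_1_singletonE insertI1)
  have "1 < q" using \<open>q \<ge> 2\<close> by simp
  then have "(\<lambda>_. 0) \<in> vecs q m" by (simp add: vecs_def)
  then have "q ^ Suc (L - 1) \<le> card (\<phi> ` agree_outside q m e (\<lambda>_. 0))"
    using False by (intro nested_collection_card_image_agree_outside[OF R F dec _ _ e]) auto
  also have "\<dots> \<le> card (vecs q l)"
    using \<phi> by (intro card_mono[OF finite_vecs]) (auto simp: agree_outside_def)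
  also have "\<dots> \<le> q ^ l" by (rule card_vecs_le)
  finally have "Suc (L - 1) \<le> l" by (rule power_le_imp_le_exp[OF \<open>1 < q\<close>])
  then show ?thesis by simp
qed simp

lemma nested_collection_length_le_card:
  assumes "finite E" "is_nested_collection E L F"
  shows "L \<le> card E"
proof (cases "L = 0")
  case False
  have "L \<le> 2 ^ (L - 1)" using False less_exp[of "L - 1"] by linarith
  also have "\<dots> = card (F L)" using assms False unfolding is_nested_collection_def by auto
  also have "\<dots> \<le> card E"
    using False by (intro card_mono[OF assms(1)] nested_collection_subset[OF assms(2)]) auto
  finally show ?thesis .
qed simp

lemma nested_collection_nesting_number:
  assumes "finite E"
  shows "\<exists>F. is_nested_collection E (nesting_number E) F"
  unfolding nesting_number_def
proof (rule GreatestI_nat)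
  show "\<exists>F. is_nested_collection E 0 F" by (simp add: is_nested_collection_def)
  show "L \<le> card E" if "\<exists>F. is_nested_collection E L F" for L
    using nested_collection_length_le_card[OF assms] that by blast
qed

lemma prime_power_ge_2:
  assumes "prime_power q"
  shows "q \<ge> 2"
proof -
  obtain p k where "prime p" "k \<ge> 1" "q = p ^ k" using assms unfolding prime_power_def by blast
  moreover from this have "p \<ge> 2" by (simp add: prime_ge_2_nat)
  ultimately show ?thesis using self_le_power[of p k] by simp
qed

theorem corollary1:
  fixes m n :: nat and R :: "nat \<Rightarrow> nat set"
  assumes "\<forall>i<n. R i \<subseteq> {..<m} \<and> R i \<noteq> {}"
    and "nesting_number (edges n R) = max_degree m (edges n R)"
  shows "(\<forall>q. prime_power q \<longrightarrow> beta_q q m n R = max_degree m (edges n R))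
         \<and> beta m n R = max_degree m (edges n R)"
proof -
  define D where "D = max_degree m (edges n R)"
  obtain F where F: "is_nested_collection (edges n R) D F"
    using nested_collection_nesting_number[of "edges n R"] assms(2) by (auto simp: D_def edges_def)
  have beta_q: "beta_q q m n R = D" if "prime_power q" for q
    unfolding beta_q_def
  proof (rule Least_equality)
    show "is_picod_scheme q m n R D"
      using is_picod_scheme_max_degree[OF assms(1)] prime_power_ge_2[OF that] by (simp add: D_def)
    show "D \<le> l" if "is_picod_scheme q m n R l" for l
      using nested_collection_le_scheme_length[OF _ F that prime_power_ge_2] assms(1) \<open>prime_power q\<close>
      by blast
  qed
  have "prime_power 2" unfolding prime_power_def by (intro exI[of _ 2] exI[of _ 1]) simp
  then have "{beta_q q m n R | q. prime_power q} = {D}" using beta_q by auto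
  then show ?thesis using beta_q by (simp add: beta_def D_def)
qed

end
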